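(* Let $W$ be a finite set and let $\preceq_1$ and $\preceq_2$ be total preorders on $W$. Then there is exactly one binary relation $\preceq_3$ on $W$ satisfying (RE1)–(RE3) with respect to $\preceq_1,\preceq_2$; consequently there is a unique revision operator $\circ$ (mapping pairs of total preorders to a relation $\preceq_1\circ\preceq_2=\preceq_3$) satisfying (RE1)–(RE3).
   Context: A total preorder on $W$ is a reflexive, transitive relation under which any two elements are comparable. For a preorder $\preceq_i$ write $\omega\prec_i\omega'$ iff $\omega\preceq_i\omega'$ and not $\omega'\preceq_i\omega$, and $\omega\sim_i\omega'$ iff $\omega\preceq_i\omega'$ and $\omega'\preceq_i\omega$; $\prec_i$ denotes the strict part $\{(x,y)\mid x\prec_i y\}$. The postulates for $\preceq_3=\preceq_1\circ\preceq_2$ are: (RE1) $\preceq_3$ is a total preorder; (RE2) $\prec_2\subseteq\prec_3$; (RE3) if $\omega\sim_2\omega'$, then $\omega\prec_3\omega'$ iff $\omega\prec_1\omega'$. *)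

theory Defs
  imports Main
begin

definition total_preorder_on :: "'a set \<Rightarrow> 'a rel \<Rightarrow> bool" where
  "total_preorder_on W R \<longleftrightarrow>
     R \<subseteq> W \<times> W \<and> (\<forall>x\<in>W. (x, x) \<in> R) \<and> trans R \<and>
     (\<forall>x\<in>W. \<forall>y\<in>W. (x, y) \<in> R \<or> (y, x) \<in> R)"

definition strict_part :: "'a rel \<Rightarrow> 'a rel" where
  "strict_part R = {(x, y). (x, y) \<in> R \<and> (y, x) \<notin> R}"

definition RE1 :: "'a set \<Rightarrow> 'a rel \<Rightarrow> bool" where
  "RE1 W R3 \<longleftrightarrow> total_preorder_on W R3"

definition RE2 :: "'a rel \<Rightarrow> 'a rel \<Rightarrow> bool" where
  "RE2 R2 R3 \<longleftrightarrow> strict_part R2 \<subseteq> strict_part R3"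

definition RE3 :: "'a rel \<Rightarrow> 'a rel \<Rightarrow> 'a rel \<Rightarrow> bool" where
  "RE3 R1 R2 R3 \<longleftrightarrow>
     (\<forall>w w'. (w, w') \<in> R2 \<and> (w', w) \<in> R2 \<longrightarrow>
        ((w, w') \<in> strict_part R3 \<longleftrightarrow> (w, w') \<in> strict_part R1))"

definition satisfies_RE :: "'a set \<Rightarrow> 'a rel \<Rightarrow> 'a rel \<Rightarrow> 'a rel \<Rightarrow> bool" where
  "satisfies_RE W R1 R2 R3 \<longleftrightarrow> RE1 W R3 \<and> RE2 R2 R3 \<and> RE3 R1 R2 R3"

end

theory Submission
  imports Defs
begin

text \<open>Postulates (RE2) and (RE3) fix the strict part of \<open>\<preceq>\<^sub>3\<close>: it is \<open>\<prec>\<^sub>2\<close>, refined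
on the \<open>\<sim>\<^sub>2\<close>-classes by \<open>\<prec>\<^sub>1\<close>. A total preorder is determined by its strict part, so
(RE1) leaves no further freedom. Conversely, the lexicographic refinement of \<open>\<preceq>\<^sub>2\<close>
by \<open>\<preceq>\<^sub>1\<close> satisfies all three postulates.\<close>

lemma total_preorder_on_eq_if_strict_part_eq:
  assumes "total_preorder_on W R" "total_preorder_on W S"
    and "strict_part R = strict_part S"
  shows "R = S"
proof -
  have char: "R = {(x, y). x \<in> W \<and> y \<in> W \<and> (y, x) \<notin> strict_part R}"
    if "total_preorder_on W R" for R
    using that unfolding total_preorder_on_def strict_part_def by auto
  have "R = {(x, y). x \<in> W \<and> y \<in> W \<and> (y, x) \<notin> strict_part R}"
    by (rule char[OF assms(1)])
  also have "\<dots> = {(x, y). x \<in> W \<and> y \<in> W \<and> (y, x) \<notin> strict_part S}"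
    by (simp only: assms(3))
  also have "\<dots> = S"
    by (rule char[OF assms(2), symmetric])
  finally show ?thesis .
qed

lemma strict_part_if_RE2_RE3:
  assumes "total_preorder_on W R2" "R3 \<subseteq> W \<times> W" "RE2 R2 R3" "RE3 R1 R2 R3"
  shows "strict_part R3 = strict_part R2 \<union> (strict_part R1 \<inter> R2 \<inter> R2\<inverse>)"
proof (intro equalityI subsetI)
  fix p assume p: "p \<in> strict_part R3"
  then obtain x y where [simp]: "p = (x, y)" and "x \<in> W" "y \<in> W"
    using assms(2) unfolding strict_part_def by blast
  then consider "(x, y) \<in> strict_part R2" | "(y, x) \<in> strict_part R2"
    | "(x, y) \<in> R2 \<inter> R2\<inverse>"
    using assms(1) unfolding total_preorder_on_def strict_part_def by blast
  then show "p \<in> strict_part R2 \<union> (strict_part R1 \<inter> R2 \<inter> R2\<inverse>)"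
  proof cases
    case 2
    then have "(y, x) \<in> strict_part R3"
      using assms(3) unfolding RE2_def by blast
    with p show ?thesis
      unfolding strict_part_def by simp
  qed (use p assms(4) in \<open>auto simp: RE3_def\<close>)
next
  fix p assume "p \<in> strict_part R2 \<union> (strict_part R1 \<inter> R2 \<inter> R2\<inverse>)"
  then show "p \<in> strict_part R3"
    using assms(3,4) unfolding RE2_def RE3_def by auto
qed

lemma satisfies_RE_unique:
  assumes "total_preorder_on W R2"
    and "satisfies_RE W R1 R2 R3" "satisfies_RE W R1 R2 R3'"
  shows "R3 = R3'"
proof (rule total_preorder_on_eq_if_strict_part_eq)
  show "total_preorder_on W R3" "total_preorder_on W R3'"
    using assms(2,3) unfolding satisfies_RE_def RE1_def by auto
  then have "R3 \<subseteq> W \<times> W" "R3' \<subseteq> W \<times> W"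
    unfolding total_preorder_on_def by auto
  with assms show "strict_part R3 = strict_part R3'"
    unfolding satisfies_RE_def by (metis strict_part_if_RE2_RE3)
qed

definition lex_refine :: "'a rel \<Rightarrow> 'a rel \<Rightarrow> 'a rel" where
  "lex_refine R1 R2 = {(x, y). (x, y) \<in> R2 \<and> ((y, x) \<notin> R2 \<or> (x, y) \<in> R1)}"

lemma trans_lex_refine:
  assumes "trans R1" "trans R2"
  shows "trans (lex_refine R1 R2)"
proof (rule transI)
  fix x y z
  assume xy: "(x, y) \<in> lex_refine R1 R2" and yz: "(y, z) \<in> lex_refine R1 R2"
  then have "(x, z) \<in> R2"
    using assms(2) unfolding lex_refine_def by (blast dest: transD)
  moreover have "(x, z) \<in> R1" if "(z, x) \<in> R2"
  proof -
    have "(y, x) \<in> R2" "(z, y) \<in> R2"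
      using that xy yz assms(2) unfolding lex_refine_def by (blast dest: transD)+
    then have "(x, y) \<in> R1" "(y, z) \<in> R1"
      using xy yz unfolding lex_refine_def by auto
    then show ?thesis
      using assms(1) by (blast dest: transD)
  qed
  ultimately show "(x, z) \<in> lex_refine R1 R2"
    unfolding lex_refine_def by auto
qed

lemma total_preorder_on_lex_refine:
  assumes "total_preorder_on W R1" "total_preorder_on W R2"
  shows "total_preorder_on W (lex_refine R1 R2)"
  using assms trans_lex_refine[of R1 R2]
  unfolding total_preorder_on_def lex_refine_def by auto

lemma satisfies_RE_lex_refine:
  assumes "total_preorder_on W R1" "total_preorder_on W R2"
  shows "satisfies_RE W R1 R2 (lex_refine R1 R2)"
  using total_preorder_on_lex_refine[OF assms]
  unfolding satisfies_RE_def RE1_def RE2_def RE3_def strict_part_def lex_refine_def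
  by auto

theorem theorem3:
  fixes W :: "'a set"
  assumes "finite W"
  shows "(\<forall>R1 R2. total_preorder_on W R1 \<and> total_preorder_on W R2 \<longrightarrow>
            (\<exists>!R3. satisfies_RE W R1 R2 R3))
       \<and> (\<exists>op :: 'a rel \<Rightarrow> 'a rel \<Rightarrow> 'a rel.
            \<forall>R1 R2. total_preorder_on W R1 \<and> total_preorder_on W R2 \<longrightarrow>
              satisfies_RE W R1 R2 (op R1 R2))
       \<and> (\<forall>op op' :: 'a rel \<Rightarrow> 'a rel \<Rightarrow> 'a rel.
            (\<forall>R1 R2. total_preorder_on W R1 \<and> total_preorder_on W R2 \<longrightarrow>
               satisfies_RE W R1 R2 (op R1 R2)) \<longrightarrow>
            (\<forall>R1 R2. total_preorder_on W R1 \<and> total_preorder_on W R2 \<longrightarrow>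
               satisfies_RE W R1 R2 (op' R1 R2)) \<longrightarrow>
            (\<forall>R1 R2. total_preorder_on W R1 \<and> total_preorder_on W R2 \<longrightarrow>
               op R1 R2 = op' R1 R2))"
proof (intro conjI allI impI)
  fix R1 R2 :: "'a rel"
  assume "total_preorder_on W R1 \<and> total_preorder_on W R2"
  then show "\<exists>!R3. satisfies_RE W R1 R2 R3"
    using satisfies_RE_lex_refine satisfies_RE_unique by metis
next
  show "\<exists>op. \<forall>R1 R2. total_preorder_on W R1 \<and> total_preorder_on W R2 \<longrightarrow>
          satisfies_RE W R1 R2 (op R1 R2)"
    using satisfies_RE_lex_refine by blast
next
  fix op op' :: "'a rel \<Rightarrow> 'a rel \<Rightarrow> 'a rel" and R1 R2
  assume "\<forall>R1 R2. total_preorder_on W R1 \<and> total_preorder_on W R2 \<longrightarrow>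
            satisfies_RE W R1 R2 (op R1 R2)"
    and "\<forall>R1 R2. total_preorder_on W R1 \<and> total_preorder_on W R2 \<longrightarrow>
            satisfies_RE W R1 R2 (op' R1 R2)"
    and "total_preorder_on W R1 \<and> total_preorder_on W R2"
  then show "op R1 R2 = op' R1 R2"
    using satisfies_RE_unique by blast
qed

end
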